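(* For $\ell=0,\dots,N$ and $v_h\in\mathcal V^h$ set $R_{\varepsilon,\ell}(v_h)=\big((I-Q_{\varepsilon,\ell})v_h,\,Q_{\varepsilon,\ell}v_h\big)_{1,k}$. Then $$(v_h,Q_\varepsilon v_h)_{1,k}=\sum_{\ell=0}^N\Big\{\Vert Q_{\varepsilon,\ell}v_h\Vert_{1,k}^2+R_{\varepsilon,\ell}(v_h)\Big\},$$ and $\vert R_{\varepsilon,\ell}(v_h)\vert\lesssim D_{\varepsilon,\ell}(v_h)+B_{\varepsilon,\ell}(v_h)$, where $$D_{\varepsilon,\ell}(v_h)=k^2\Vert(I-Q_{\varepsilon,\ell})v_h\Vert_{L^2(\Omega_\ell)}\Vert Q_{\varepsilon,\ell}v_h\Vert_{L^2(\Omega_\ell)},\quad B_{\varepsilon,\ell}(v_h)=k\Vert(I-Q_{\varepsilon,\ell})v_h\Vert_{L^2(\Gamma_\ell)}\Vert Q_{\varepsilon,\ell}v_h\Vert_{L^2(\Gamma_\ell)},$$ with $\Omega_0=\Omega$, $\Gamma_0=\Gamma$ and $\Gamma_\ell=\Gamma\cap\partial\Omega_\ell$ for $\ell=1,\dots,N$.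
   Context: $\Omega\subset\mathbb R^d$ ($d=2,3$) bounded Lipschitz polygonal/polyhedral domain, boundary $\Gamma$. $k>0$, $\varepsilon\in\mathbb R\setminus\{0\}$, $\eta\in\mathbb C$; $z=\sqrt{k^2+{\rm i}\varepsilon}$ (branch cut on positive real axis). Standing assumptions: $\vert\varepsilon\vert\lesssim k^2$, $\vert\eta\vert\lesssim k$, $\Re(\overline z\eta)\ge0$. $A\lesssim B$ means $A\le cB$ with $c$ independent of $k,\varepsilon,\eta$ and mesh/subdomain parameters. $a_\varepsilon(u,v)=\int_\Omega\nabla u\cdot\nabla\overline v-(k^2+{\rm i}\varepsilon)\int_\Omega u\overline v-{\rm i}\eta\int_\Gamma u\overline v$; $(v,w)_{1,k}=\int_\Omega\nabla v\cdot\nabla\overline w+k^2\int_\Omega v\overline w$, $\Vert v\Vert_{1,k}=(v,v)_{1,k}^{1/2}$. $\mathcal V^h$: continuous $P1$ functions on a conforming simplicial mesh. Subdomains $\Omega_\ell$, $\ell=1,\dots,N$, unions of fine elements forming an overlapping cover of $\overline\Omega$; $\mathcal V_\ell=\{v_h\in\mathcal V^h:\mathrm{supp}\,v_h\subset\overline\Omega_\ell\}$; $\mathcal V_0\subset\mathcal V^h$ the continuous $P1$ functions on a coarse simplicial mesh whose elements are unions of fine elements. $Q_{\varepsilon,\ell}:H^1(\Omega)\to\mathcal V_\ell$ ($\ell=0,\dots,N$) with $a_\varepsilon(Q_{\varepsilon,\ell}v,w)=a_\varepsilon(v,w)$ for all $w\in\mathcal V_\ell$; $Q_\varepsilon=\sum_{\ell=0}^NQ_{\varepsilon,\ell}$.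 *)

theory Defs
  imports "HOL-Analysis.Analysis" "HOL-Combinatorics.Permutations"
begin

definition lipschitz_domain :: "'a::euclidean_space set \<Rightarrow> bool" where
  "lipschitz_domain \<Omega> \<longleftrightarrow>
     (\<forall>x0 \<in> frontier \<Omega>. \<exists>r>0. \<exists>\<nu> L g. norm \<nu> = 1 \<and>
        L-lipschitz_on {y. y \<bullet> \<nu> = 0} (g :: 'a \<Rightarrow> real) \<and>
        \<Omega> \<inter> ball x0 r = {x \<in> ball x0 r. x \<bullet> \<nu> < g (x - (x \<bullet> \<nu>) *\<^sub>R \<nu>)})"

text \<open>A conforming simplicial mesh of the closure of Omega; each element is given by its vertex set
  (d+1 affinely independent points), the element itself being the convex hull.\<close>
definition simplicial_mesh :: "'a::euclidean_space set \<Rightarrow> 'a set set \<Rightarrow> bool" where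
  "simplicial_mesh \<Omega> \<T> \<longleftrightarrow>
     finite \<T> \<and>
     (\<forall>S\<in>\<T>. finite S \<and> card S = DIM('a) + 1 \<and> \<not> affine_dependent S) \<and>
     (\<forall>S\<in>\<T>. \<forall>S'\<in>\<T>. convex hull S \<inter> convex hull S' = convex hull (S \<inter> S')) \<and>
     (\<Union>S\<in>\<T>. convex hull S) = closure \<Omega>"

definition P1_space :: "'a::euclidean_space set \<Rightarrow> 'a set set \<Rightarrow> ('a \<Rightarrow> complex) set" where
  "P1_space \<Omega> \<T> =
     {v. continuous_on (closure \<Omega>) v \<and> (\<forall>x. x \<notin> closure \<Omega> \<longrightarrow> v x = 0) \<and>
         (\<forall>S\<in>\<T>. \<exists>L c. linear (L :: 'a \<Rightarrow> complex) \<and> (\<forall>x \<in> convex hull S. v x = L x + c))}"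

definition supp :: "('a::topological_space \<Rightarrow> complex) \<Rightarrow> 'a set" where
  "supp v = closure {x. v x \<noteq> 0}"

definition grad_form :: "'a::euclidean_space set \<Rightarrow> ('a \<Rightarrow> complex) \<Rightarrow> ('a \<Rightarrow> complex) \<Rightarrow> complex" where
  "grad_form S u w = (LINT x:S|lebesgue.
      (\<Sum>b\<in>Basis. frechet_derivative u (at x) b * cnj (frechet_derivative w (at x) b)))"

definition L2_form :: "'a::euclidean_space set \<Rightarrow> ('a \<Rightarrow> complex) \<Rightarrow> ('a \<Rightarrow> complex) \<Rightarrow> complex" where
  "L2_form S u w = (LINT x:S|lebesgue. u x * cnj (w x))"

definition L2_norm_on :: "'a::euclidean_space set \<Rightarrow> ('a \<Rightarrow> complex) \<Rightarrow> real" where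
  "L2_norm_on S v = sqrt (LINT x:S|lebesgue. (cmod (v x))\<^sup>2)"

definition det_nat :: "nat \<Rightarrow> (nat \<Rightarrow> nat \<Rightarrow> real) \<Rightarrow> real" where
  "det_nat m G = (\<Sum>\<pi> | \<pi> permutes {..<m}. of_int (sign \<pi>) * (\<Prod>i<m. G i (\<pi> i)))"

definition std_simplex :: "nat \<Rightarrow> (nat \<Rightarrow> real) set" where
  "std_simplex m = {t \<in> PiE {..<m} (\<lambda>_. UNIV). (\<forall>i<m. 0 \<le> t i) \<and> (\<Sum>i<m. t i) \<le> 1}"

text \<open>Integral over a flat simplex with vertex set F (surface measure of its affine hull),
  computed via an affine parametrisation over the standard simplex with Gram-determinant Jacobian.\<close>
definition simplex_integral ::
  "'a::euclidean_space set \<Rightarrow> ('a \<Rightarrow> 'b::{banach,second_countable_topology}) \<Rightarrow> 'b" where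
  "simplex_integral F f =
     (let m = card F - 1;
          p = (SOME p. bij_betw p {..<card F} F);
          e = (\<lambda>i. p (Suc i) - p 0);
          J = sqrt (det_nat m (\<lambda>i j. e i \<bullet> e j))
      in J *\<^sub>R (LINT t:std_simplex m | PiM {..<m} (\<lambda>_. lborel). f (p 0 + (\<Sum>i<m. t i *\<^sub>R e i))))"

definition boundary_facets :: "'a::euclidean_space set \<Rightarrow> 'a set set \<Rightarrow> 'a set set" where
  "boundary_facets \<Omega> \<T> =
     {F. \<exists>S\<in>\<T>. F \<subseteq> S \<and> card F = DIM('a) \<and> convex hull F \<subseteq> frontier \<Omega>}"

definition bdry_integral ::
  "'a::euclidean_space set \<Rightarrow> 'a set set \<Rightarrow> 'a set \<Rightarrow> ('a \<Rightarrow> 'b::{banach,second_countable_topology}) \<Rightarrow> 'b" where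
  "bdry_integral \<Omega> \<T> G f = (\<Sum>F\<in>boundary_facets \<Omega> \<T>. simplex_integral F (\<lambda>x. indicator G x *\<^sub>R f x))"

definition bdry_norm_on :: "'a::euclidean_space set \<Rightarrow> 'a set set \<Rightarrow> 'a set \<Rightarrow> ('a \<Rightarrow> complex) \<Rightarrow> real" where
  "bdry_norm_on \<Omega> \<T> G v = sqrt (bdry_integral \<Omega> \<T> G (\<lambda>x. (cmod (v x))\<^sup>2))"

text \<open>z = sqrt(k^2 + i eps) with branch cut on the positive real axis, i.e. Im z > 0.\<close>
definition helm_z :: "real \<Rightarrow> real \<Rightarrow> complex" where
  "helm_z k \<epsilon> = (let s = csqrt (complex_of_real (k\<^sup>2) + \<i> * complex_of_real \<epsilon>)
                  in if Im s > 0 then s else - s)"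

definition a_eps :: "'a::euclidean_space set \<Rightarrow> 'a set set \<Rightarrow> real \<Rightarrow> real \<Rightarrow> complex
                      \<Rightarrow> ('a \<Rightarrow> complex) \<Rightarrow> ('a \<Rightarrow> complex) \<Rightarrow> complex" where
  "a_eps \<Omega> \<T> k \<epsilon> \<eta> u w =
     grad_form \<Omega> u w - (complex_of_real (k\<^sup>2) + \<i> * complex_of_real \<epsilon>) * L2_form \<Omega> u w
     - \<i> * \<eta> * bdry_integral \<Omega> \<T> (frontier \<Omega>) (\<lambda>x. u x * cnj (w x))"

definition ip1k :: "'a::euclidean_space set \<Rightarrow> real \<Rightarrow> ('a \<Rightarrow> complex) \<Rightarrow> ('a \<Rightarrow> complex) \<Rightarrow> complex" where
  "ip1k \<Omega> k u w = grad_form \<Omega> u w + complex_of_real (k\<^sup>2) * L2_form \<Omega> u w"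

definition norm1k :: "'a::euclidean_space set \<Rightarrow> real \<Rightarrow> ('a \<Rightarrow> complex) \<Rightarrow> real" where
  "norm1k \<Omega> k v = sqrt (Re (ip1k \<Omega> k v v))"

end

theory Submission
  imports Defs
begin

text \<open>
  The identity is sesquilinearity of (.,.)_{1,k}: (v, Q_l v) = |Q_l v|^2 + ((I - Q_l) v, Q_l v).
  For the residual, Galerkin orthogonality a_eps((I - Q_l) v, Q_l v) = 0 trades the gradient term
  for lower-order terms: the residual equals
  (2k^2 + i eps) ((I - Q_l) v, Q_l v)_{L^2} + i eta <(I - Q_l) v, Q_l v>_Gamma.
  Since Q_l v vanishes outside the closure of Omega_l, whose boundary is a null set, and a boundary
  point of the Lipschitz domain Omega lying in that closure is a boundary point of Omega_l, the
  Cauchy-Schwarz inequality on Omega_l and Gamma_l together with |eps| <= c1 k^2, |eta| <= c2 k gives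
  the bound with C = 2 + |c1| + |c2|. Finite element functions are bounded, Borel measurable and
  differentiable off the null set of element boundaries with bounded derivatives; this is all the
  integration theory needs.
\<close>

definition bounded_borel :: "('a::euclidean_space \<Rightarrow> 'b::real_normed_vector) \<Rightarrow> bool" where
  "bounded_borel f \<longleftrightarrow> f \<in> borel_measurable borel \<and> (\<exists>B. \<forall>x. norm (f x) \<le> B)"

lemma bounded_borelI:
  assumes "f \<in> borel_measurable borel" and "\<And>x. norm (f x) \<le> B"
  shows "bounded_borel f"
  using assms unfolding bounded_borel_def by blast

lemma bounded_borelE:
  assumes "bounded_borel f"
  obtains B where "f \<in> borel_measurable borel" "0 \<le> B" "\<And>x. norm (f x) \<le> B"
proof -
  obtain B where "f \<in> borel_measurable borel" "\<And>x. norm (f x) \<le> B"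
    using assms unfolding bounded_borel_def by blast
  moreover have "0 \<le> B" using norm_ge_zero order_trans calculation(2) by blast
  ultimately show ?thesis using that by blast
qed

lemma bounded_borel_const: "bounded_borel (\<lambda>x. c)"
  by (rule bounded_borelI[where B = "norm c"]) auto

lemma bounded_borel_add:
  fixes f g :: "'a::euclidean_space \<Rightarrow> 'b::{real_normed_vector, second_countable_topology}"
  assumes "bounded_borel f" "bounded_borel g"
  shows "bounded_borel (\<lambda>x. f x + g x)"
proof -
  obtain B1 B2 where "f \<in> borel_measurable borel" "\<And>x. norm (f x) \<le> B1"
    "g \<in> borel_measurable borel" "\<And>x. norm (g x) \<le> B2"
    using assms by (metis bounded_borelE)
  then show ?thesis
    by (intro bounded_borelI[where B = "B1 + B2"]) (auto intro: norm_triangle_le add_mono)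
qed

lemma bounded_borel_mult_left:
  fixes f :: "'a::euclidean_space \<Rightarrow> 'b::{real_normed_field, second_countable_topology}"
  assumes "bounded_borel f"
  shows "bounded_borel (\<lambda>x. c * f x)"
proof -
  obtain B where "f \<in> borel_measurable borel" "\<And>x. norm (f x) \<le> B"
    using assms by (metis bounded_borelE)
  then show ?thesis
    by (intro bounded_borelI[where B = "norm c * B"]) (auto simp: norm_mult intro: mult_left_mono)
qed

lemma bounded_borel_indicator:
  assumes "G \<in> sets borel" "bounded_borel f"
  shows "bounded_borel (\<lambda>x. indicator G x *\<^sub>R f x)"
proof -
  obtain B where "f \<in> borel_measurable borel" "\<And>x. norm (f x) \<le> B" "0 \<le> B"
    using assms(2) by (metis bounded_borelE)
  with assms(1) show ?thesis
    by (intro bounded_borelI[where B = B]) (auto simp: indicator_def)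
qed

lemma borel_measurable_cnj [measurable (raw)]:
  assumes "f \<in> borel_measurable M"
  shows "(\<lambda>x. cnj (f x :: complex)) \<in> borel_measurable M"
  using measurable_comp[OF assms continuous_on_cnj[THEN borel_measurable_continuous_onI]]
  by (simp add: comp_def)

lemma bounded_borel_mult_cnj:
  fixes u w :: "'a::euclidean_space \<Rightarrow> complex"
  assumes "bounded_borel u" "bounded_borel w"
  shows "bounded_borel (\<lambda>x. u x * cnj (w x))"
proof -
  obtain B1 B2 where "u \<in> borel_measurable borel" "\<And>x. norm (u x) \<le> B1" "0 \<le> B1"
    "w \<in> borel_measurable borel" "\<And>x. norm (w x) \<le> B2"
    using assms by (metis bounded_borelE)
  then show ?thesis
    by (intro bounded_borelI[where B = "B1 * B2"]) (auto simp: norm_mult intro: mult_mono)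
qed

lemma bounded_borel_norm_mult:
  fixes u w :: "'a::euclidean_space \<Rightarrow> 'b::real_normed_vector"
  assumes "bounded_borel u" "bounded_borel w"
  shows "bounded_borel (\<lambda>x. norm (u x) * norm (w x))"
proof -
  obtain B1 B2 where "u \<in> borel_measurable borel" "\<And>x. norm (u x) \<le> B1" "0 \<le> B1"
    "w \<in> borel_measurable borel" "\<And>x. norm (w x) \<le> B2"
    using assms by (metis bounded_borelE)
  then show ?thesis
    by (intro bounded_borelI[where B = "B1 * B2"]) (auto intro: mult_mono)
qed

lemma bounded_borel_norm_power2:
  "bounded_borel u \<Longrightarrow> bounded_borel (\<lambda>x. (norm (u x))\<^sup>2)"
  using bounded_borel_norm_mult[of u u] by (simp add: power2_eq_square)

lemma le_sqrt_mult_if_weighted_am_gm: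
  fixes A B X :: real
  assumes A: "0 \<le> A" and B: "0 \<le> B" and H: "\<And>t. t > 0 \<Longrightarrow> 2 * X \<le> t * A + B / t"
  shows "X \<le> sqrt A * sqrt B"
proof (cases "A > 0 \<and> B > 0")
  case True
  obtain a b where ab: "a > 0" "b > 0" "A = a\<^sup>2" "B = b\<^sup>2"
    using True by (metis real_sqrt_gt_0_iff real_sqrt_pow2 less_imp_le)
  have "2 * X \<le> b / a * A + B / (b / a)"
    using H[of "b / a"] ab by simp
  also have "\<dots> = 2 * (sqrt A * sqrt B)"
    using ab by (simp add: field_simps power2_eq_square)
  finally show ?thesis by simp
next
  case False
  show ?thesis
  proof (rule ccontr)
    assume "\<not> X \<le> sqrt A * sqrt B"
    moreover have "A = 0 \<or> B = 0" using False A B by auto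
    ultimately have X: "X > 0" by auto
    \<comment> \<open>if one of A, B vanishes, the weight t can be chosen to make the right-hand side smaller than 2X\<close>
    from \<open>A = 0 \<or> B = 0\<close> show False
    proof
      assume "A = 0"
      have "B / ((B + 1) / X) < X" using X B by (simp add: field_simps)
      then show False using H[of "(B + 1) / X"] \<open>A = 0\<close> X B by simp
    next
      assume "B = 0"
      have "X / (A + 1) * A < X" using X A by (simp add: field_simps)
      then show False using H[of "X / (A + 1)"] \<open>B = 0\<close> X A by simp
    qed
  qed
qed

lemma cauchy_schwarz_positive_functional:
  fixes I :: "('a::euclidean_space \<Rightarrow> real) \<Rightarrow> real" and u w :: "'a \<Rightarrow> 'b::real_normed_vector"
  assumes add: "\<And>f g. bounded_borel f \<Longrightarrow> bounded_borel g \<Longrightarrow> I (\<lambda>x. f x + g x) = I f + I g"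
    and scale: "\<And>c f. bounded_borel f \<Longrightarrow> I (\<lambda>x. c * f x) = c * I f"
    and mono: "\<And>f g. bounded_borel f \<Longrightarrow> bounded_borel g \<Longrightarrow> (\<And>x. f x \<le> g x) \<Longrightarrow> I f \<le> I g"
    and u: "bounded_borel u" and w: "bounded_borel w"
  shows "I (\<lambda>x. norm (u x) * norm (w x)) \<le> sqrt (I (\<lambda>x. (norm (u x))\<^sup>2)) * sqrt (I (\<lambda>x. (norm (w x))\<^sup>2))"
proof (rule le_sqrt_mult_if_weighted_am_gm)
  have u2: "bounded_borel (\<lambda>x. (norm (u x))\<^sup>2)" and w2: "bounded_borel (\<lambda>x. (norm (w x))\<^sup>2)"
    using u w by (auto intro: bounded_borel_norm_power2)
  have "I (\<lambda>x. 0) = 0"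
    using scale[where c = 0 and f = "\<lambda>x. 0"] bounded_borel_const by simp blast
  then have nonneg: "0 \<le> I f" if "bounded_borel f" "\<And>x. 0 \<le> f x" for f
    using mono[of "\<lambda>x. 0" f] that bounded_borel_const by metis
  show "0 \<le> I (\<lambda>x. (norm (u x))\<^sup>2)" "0 \<le> I (\<lambda>x. (norm (w x))\<^sup>2)"
    using u2 w2 by (auto intro: nonneg)
  fix t :: real assume t: "t > 0"
  have "2 * I (\<lambda>x. norm (u x) * norm (w x)) = I (\<lambda>x. 2 * (norm (u x) * norm (w x)))"
    using scale u w by (simp add: bounded_borel_norm_mult)
  also have "\<dots> \<le> I (\<lambda>x. t * (norm (u x))\<^sup>2 + (1 / t) * (norm (w x))\<^sup>2)"
  proof (rule mono)
    fix x
    have "0 \<le> (t * norm (u x) - norm (w x))\<^sup>2 / t" using t by simp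
    then show "2 * (norm (u x) * norm (w x)) \<le> t * (norm (u x))\<^sup>2 + 1 / t * (norm (w x))\<^sup>2"
      using t by (simp add: power2_eq_square field_simps)
  next
    show "bounded_borel (\<lambda>x. 2 * (norm (u x) * norm (w x)))"
      using u w by (intro bounded_borel_mult_left bounded_borel_norm_mult)
    show "bounded_borel (\<lambda>x. t * (norm (u x))\<^sup>2 + (1 / t) * (norm (w x))\<^sup>2)"
      using u2 w2 by (intro bounded_borel_add bounded_borel_mult_left)
  qed
  also have "\<dots> = t * I (\<lambda>x. (norm (u x))\<^sup>2) + (1 / t) * I (\<lambda>x. (norm (w x))\<^sup>2)"
    using u2 w2 by (simp only: add scale bounded_borel_mult_left)
  finally show "2 * I (\<lambda>x. norm (u x) * norm (w x)) \<le> t * I (\<lambda>x. (norm (u x))\<^sup>2) + I (\<lambda>x. (norm (w x))\<^sup>2) / t"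
    by simp
qed

lemma set_integrable_bounded_borel:
  fixes f :: "'a::euclidean_space \<Rightarrow> 'b::{banach, second_countable_topology}"
  assumes "bounded_borel f" "S \<in> sets lebesgue" "bounded S"
  shows "set_integrable lebesgue S f"
proof -
  obtain B where f: "f \<in> borel_measurable borel" and B: "\<And>x. norm (f x) \<le> B"
    using assms(1) by (metis bounded_borelE)
  have "f \<in> borel_measurable lebesgue"
    using f by (intro measurable_completion) (simp add: measurable_lborel1)
  moreover have "emeasure lebesgue S < \<infinity>"
    using assms(2,3) bounded_set_imp_lmeasurable fmeasurable_def by blast
  ultimately show ?thesis
    unfolding set_integrable_def using assms(2)
    by (intro integrableI_bounded_set[where A = S and B = B]) (auto simp: B indicator_def)
qed

lemma norm_L2_form_le:
  fixes u w :: "'a::euclidean_space \<Rightarrow> complex"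
  assumes u: "bounded_borel u" and w: "bounded_borel w" and S: "S \<in> sets lebesgue" "bounded S"
  shows "cmod (L2_form S u w) \<le> L2_norm_on S u * L2_norm_on S w"
proof -
  have int: "set_integrable lebesgue S f" if "bounded_borel f" for f :: "'a \<Rightarrow> real"
    using that S by (rule set_integrable_bounded_borel)
  have "cmod (L2_form S u w) \<le> (LINT x:S|lebesgue. cmod (u x * cnj (w x)))"
    unfolding L2_form_def by (rule set_integral_norm_bound)
      (use set_integrable_bounded_borel[OF bounded_borel_mult_cnj[OF u w] S] in \<open>simp add: set_integrable_def\<close>)
  also have "\<dots> = (LINT x:S|lebesgue. cmod (u x) * cmod (w x))"
    by (simp add: norm_mult)
  also have "\<dots> \<le> L2_norm_on S u * L2_norm_on S w"
    unfolding L2_norm_on_def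
    by (rule cauchy_schwarz_positive_functional[OF _ _ _ u w])
       (auto intro!: set_integral_add set_integral_mono int)
  finally show ?thesis .
qed

definition simplex_enum :: "'a::euclidean_space set \<Rightarrow> nat \<Rightarrow> 'a" where
  "simplex_enum F = (SOME p. bij_betw p {..<card F} F)"

definition simplex_edge :: "'a::euclidean_space set \<Rightarrow> nat \<Rightarrow> 'a" where
  "simplex_edge F i = simplex_enum F (Suc i) - simplex_enum F 0"

definition simplex_param :: "'a::euclidean_space set \<Rightarrow> (nat \<Rightarrow> real) \<Rightarrow> 'a" where
  "simplex_param F t = simplex_enum F 0 + (\<Sum>i<card F - 1. t i *\<^sub>R simplex_edge F i)"

definition simplex_gram_root :: "'a::euclidean_space set \<Rightarrow> real" where
  "simplex_gram_root F = sqrt (det_nat (card F - 1) (\<lambda>i j. simplex_edge F i \<bullet> simplex_edge F j))"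

lemma simplex_integral_eq:
  "simplex_integral F f = simplex_gram_root F *\<^sub>R
     (\<integral>t. indicator (std_simplex (card F - 1)) t *\<^sub>R f (simplex_param F t) \<partial>PiM {..<card F - 1} (\<lambda>_. lborel))"
  unfolding simplex_integral_def simplex_gram_root_def simplex_param_def simplex_edge_def
    simplex_enum_def Let_def set_lebesgue_integral_def ..

lemma det_nat_gram_nonneg:
  fixes e :: "nat \<Rightarrow> 'a::real_inner"
  assumes "m = 1 \<or> m = 2"
  shows "0 \<le> det_nat m (\<lambda>i j. e i \<bullet> e j)"
  using assms
proof
  assume "m = 1"
  then show ?thesis by (simp add: det_nat_def lessThan_Suc)
next
  assume m: "m = 2"
  have "{..<2::nat} = insert 0 {1}" by auto
  then have "det_nat 2 (\<lambda>i j. e i \<bullet> e j) = (e 0 \<bullet> e 0) * (e 1 \<bullet> e 1) - (e 0 \<bullet> e 1) * (e 1 \<bullet> e 0)"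
    unfolding det_nat_def by (simp add: sum_over_permutations_insert sign_swap_id lessThan_Suc transpose_def)
  moreover have "(e 0 \<bullet> e 1) * (e 1 \<bullet> e 0) \<le> (e 0 \<bullet> e 0) * (e 1 \<bullet> e 1)"
  proof -
    have "\<bar>e 0 \<bullet> e 1\<bar>\<^sup>2 \<le> (norm (e 0) * norm (e 1))\<^sup>2"
      by (intro power_mono Cauchy_Schwarz_ineq2) auto
    then show ?thesis
      by (simp add: inner_commute power_mult_distrib power2_norm_eq_inner[symmetric] power2_eq_square[symmetric])
  qed
  ultimately show ?thesis using m by simp
qed

lemma simplex_gram_root_nonneg:
  assumes "card F = 2 \<or> card F = 3"
  shows "0 \<le> simplex_gram_root F"
  unfolding simplex_gram_root_def using assms by (auto intro: det_nat_gram_nonneg)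

lemma std_simplex_sets: "std_simplex m \<in> sets (PiM {..<m} (\<lambda>_. lborel))"
proof -
  have "std_simplex m = {t \<in> space (PiM {..<m} (\<lambda>_. lborel)). (\<forall>i\<in>{..<m}. 0 \<le> t i) \<and> (\<Sum>i<m. t i) \<le> 1}"
    by (auto simp: std_simplex_def space_PiM)
  also have "\<dots> \<in> sets (PiM {..<m} (\<lambda>_. lborel))"
    by measurable
  finally show ?thesis .
qed

lemma std_simplex_subset_unit_cube: "std_simplex m \<subseteq> PiE {..<m} (\<lambda>_. {0..1})"
proof
  fix t assume t: "t \<in> std_simplex m"
  have "t i \<le> 1" if "i < m" for i
  proof -
    have "t i \<le> (\<Sum>j<m. t j)"
      using t that by (intro member_le_sum) (auto simp: std_simplex_def)
    then show ?thesis using t by (auto simp: std_simplex_def)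
  qed
  with t show "t \<in> PiE {..<m} (\<lambda>_. {0..1})"
    by (auto simp: std_simplex_def PiE_def Pi_def)
qed

lemma emeasure_std_simplex_finite: "emeasure (PiM {..<m} (\<lambda>_. lborel)) (std_simplex m) < \<infinity>"
proof -
  interpret product_sigma_finite "\<lambda>_. lborel" by standard
  have "emeasure (PiM {..<m} (\<lambda>_. lborel)) (std_simplex m)
      \<le> emeasure (PiM {..<m} (\<lambda>_. lborel)) (PiE {..<m} (\<lambda>_. {0..1::real}))"
    by (rule emeasure_mono[OF std_simplex_subset_unit_cube]) (auto intro!: sets_PiM_I_finite)
  also have "\<dots> = 1"
    by (subst emeasure_PiM) auto
  finally show ?thesis by (simp add: order_le_less_trans)
qed

lemma integrable_std_simplex_affine:
  fixes f :: "'a::euclidean_space \<Rightarrow> 'b::{banach, second_countable_topology}"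
  assumes "bounded_borel f"
  shows "integrable (PiM {..<m} (\<lambda>_. lborel))
           (\<lambda>t. indicator (std_simplex m) t *\<^sub>R f (p0 + (\<Sum>i<m. t i *\<^sub>R e i)))"
proof -
  obtain B where f[measurable]: "f \<in> borel_measurable borel" and B: "\<And>x. norm (f x) \<le> B"
    using assms by (metis bounded_borelE)
  have [measurable]: "std_simplex m \<in> sets (PiM {..<m} (\<lambda>_. lborel))"
    by (rule std_simplex_sets)
  show ?thesis
  proof (rule integrableI_bounded_set[where A = "std_simplex m" and B = B])
    show "emeasure (PiM {..<m} (\<lambda>_. lborel)) (std_simplex m) < \<infinity>"
      by (rule emeasure_std_simplex_finite)
    show "(\<lambda>t. indicator (std_simplex m) t *\<^sub>R f (p0 + (\<Sum>i<m. t i *\<^sub>R e i)))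
        \<in> borel_measurable (PiM {..<m} (\<lambda>_. lborel))"
      by measurable
  qed (auto simp: B indicator_def)
qed

lemma simplex_integral_add:
  fixes f g :: "'a::euclidean_space \<Rightarrow> 'b::{banach, second_countable_topology}"
  assumes "bounded_borel f" "bounded_borel g"
  shows "simplex_integral F (\<lambda>x. f x + g x) = simplex_integral F f + simplex_integral F g"
  unfolding simplex_integral_eq simplex_param_def
  by (simp add: scaleR_add_right integrable_std_simplex_affine assms)

lemma simplex_integral_scaleR:
  "simplex_integral F (\<lambda>x. c *\<^sub>R f x) = c *\<^sub>R simplex_integral F f"
proof -
  have commute: "(\<lambda>t. indicator A t *\<^sub>R c *\<^sub>R f (\<phi> t)) = (\<lambda>t. c *\<^sub>R (indicator A t *\<^sub>R f (\<phi> t)))"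
    for A \<phi>
    by (rule ext) (rule scaleR_left_commute)
  show ?thesis
    unfolding simplex_integral_eq commute integral_scaleR_right by (rule scaleR_left_commute)
qed

lemma simplex_integral_mono:
  fixes f g :: "'a::euclidean_space \<Rightarrow> real"
  assumes "bounded_borel f" "bounded_borel g" "\<And>x. f x \<le> g x" "0 \<le> simplex_gram_root F"
  shows "simplex_integral F f \<le> simplex_integral F g"
  unfolding simplex_integral_eq simplex_param_def
  by (intro scaleR_left_mono integral_mono integrable_std_simplex_affine assms)
     (auto simp: indicator_def assms(3))

lemma simplex_integral_nonneg:
  fixes f :: "'a::euclidean_space \<Rightarrow> real"
  assumes "\<And>x. 0 \<le> f x" "0 \<le> simplex_gram_root F"
  shows "0 \<le> simplex_integral F f"
  unfolding simplex_integral_eq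
  by (intro scaleR_nonneg_nonneg integral_nonneg assms) (auto simp: indicator_def assms)

lemma norm_simplex_integral_le:
  fixes f :: "'a::euclidean_space \<Rightarrow> 'b::{banach, second_countable_topology}"
  assumes "0 \<le> simplex_gram_root F"
  shows "norm (simplex_integral F f) \<le> simplex_integral F (\<lambda>x. norm (f x))"
proof -
  have "norm (\<integral>t. indicator A t *\<^sub>R f (\<phi> t) \<partial>M) \<le> (\<integral>t. indicator A t * norm (f (\<phi> t)) \<partial>M)"
    for M A \<phi>
  proof -
    have "(\<lambda>t. norm (indicator A t *\<^sub>R f (\<phi> t))) = (\<lambda>t. indicator A t * norm (f (\<phi> t)))"
      by (auto simp: indicator_def)
    then show ?thesis using integral_norm_bound[of M "\<lambda>t. indicator A t *\<^sub>R f (\<phi> t)"] by simp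
  qed
  then show ?thesis
    unfolding simplex_integral_eq norm_scaleR abs_of_nonneg[OF assms] real_scaleR_def
    by (rule mult_left_mono) (rule assms)
qed

lemma boundary_facet_gram_root_nonneg:
  assumes "DIM('a) = 2 \<or> DIM('a) = 3" "F \<in> boundary_facets (\<Omega>::'a::euclidean_space set) T"
  shows "0 \<le> simplex_gram_root F"
  using assms by (intro simplex_gram_root_nonneg) (auto simp: boundary_facets_def)

lemma bdry_integral_add:
  fixes f g :: "'a::euclidean_space \<Rightarrow> 'b::{banach, second_countable_topology}"
  assumes "G \<in> sets borel" "bounded_borel f" "bounded_borel g"
  shows "bdry_integral \<Omega> T G (\<lambda>x. f x + g x) = bdry_integral \<Omega> T G f + bdry_integral \<Omega> T G g"
  unfolding bdry_integral_def scaleR_add_right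
  by (simp add: simplex_integral_add bounded_borel_indicator assms sum.distrib)

lemma bdry_integral_scaleR:
  "bdry_integral \<Omega> T G (\<lambda>x. c *\<^sub>R f x) = c *\<^sub>R bdry_integral \<Omega> T G f"
  unfolding bdry_integral_def scaleR_left_commute[of _ c] simplex_integral_scaleR
  by (simp add: scaleR_sum_right)

lemma bdry_integral_mono:
  fixes f g :: "'a::euclidean_space \<Rightarrow> real"
  assumes "DIM('a) = 2 \<or> DIM('a) = 3" "G \<in> sets borel" "bounded_borel f" "bounded_borel g"
    and "\<And>x. f x \<le> g x"
  shows "bdry_integral \<Omega> T G f \<le> bdry_integral \<Omega> T G g"
  unfolding bdry_integral_def
  by (intro sum_mono simplex_integral_mono bounded_borel_indicator boundary_facet_gram_root_nonneg assms)
     (auto simp: indicator_def assms(5))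

lemma bdry_integral_nonneg:
  fixes f :: "'a::euclidean_space \<Rightarrow> real"
  assumes "DIM('a) = 2 \<or> DIM('a) = 3" "\<And>x. 0 \<le> f x"
  shows "0 \<le> bdry_integral \<Omega> T G f"
  unfolding bdry_integral_def
  by (intro sum_nonneg simplex_integral_nonneg boundary_facet_gram_root_nonneg assms(1))
     (auto simp: assms(2) indicator_def)

lemma norm_bdry_integral_le:
  fixes f :: "'a::euclidean_space \<Rightarrow> 'b::{banach, second_countable_topology}"
  assumes "DIM('a) = 2 \<or> DIM('a) = 3"
  shows "norm (bdry_integral \<Omega> T G f) \<le> bdry_integral \<Omega> T G (\<lambda>x. norm (f x))"
proof -
  have "norm (bdry_integral \<Omega> T G f)
      \<le> (\<Sum>F\<in>boundary_facets \<Omega> T. norm (simplex_integral F (\<lambda>x. indicator G x *\<^sub>R f x)))"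
    unfolding bdry_integral_def by (rule norm_sum)
  also have "\<dots> \<le> (\<Sum>F\<in>boundary_facets \<Omega> T. simplex_integral F (\<lambda>x. norm (indicator G x *\<^sub>R f x)))"
    by (intro sum_mono norm_simplex_integral_le boundary_facet_gram_root_nonneg assms)
  also have "(\<lambda>x. norm (indicator G x *\<^sub>R f x)) = (\<lambda>x. indicator G x *\<^sub>R norm (f x))"
    by (auto simp: indicator_def)
  finally show ?thesis unfolding bdry_integral_def .
qed

lemma norm_bdry_integral_mult_cnj_le:
  fixes u w :: "'a::euclidean_space \<Rightarrow> complex"
  assumes "DIM('a) = 2 \<or> DIM('a) = 3" "G \<in> sets borel" "bounded_borel u" "bounded_borel w"
  shows "cmod (bdry_integral \<Omega> T G (\<lambda>x. u x * cnj (w x)))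
           \<le> bdry_norm_on \<Omega> T G u * bdry_norm_on \<Omega> T G w"
proof -
  have "cmod (bdry_integral \<Omega> T G (\<lambda>x. u x * cnj (w x)))
      \<le> bdry_integral \<Omega> T G (\<lambda>x. cmod (u x) * cmod (w x))"
    using norm_bdry_integral_le[OF assms(1), where f = "\<lambda>x. u x * cnj (w x)"] by (simp add: norm_mult)
  also have "\<dots> \<le> bdry_norm_on \<Omega> T G u * bdry_norm_on \<Omega> T G w"
    unfolding bdry_norm_on_def
  proof (rule cauchy_schwarz_positive_functional[OF _ _ _ assms(3,4)])
    show "bdry_integral \<Omega> T G (\<lambda>x. c * f x) = c * bdry_integral \<Omega> T G f"
      for c :: real and f :: "'a \<Rightarrow> real"
      using bdry_integral_scaleR[where c = c and f = f] by simp
  qed (simp_all add: bdry_integral_add bdry_integral_mono assms(1,2))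
  finally show ?thesis .
qed

definition bounded_ae_differentiable :: "'a::euclidean_space set \<Rightarrow> ('a \<Rightarrow> complex) \<Rightarrow> bool" where
  "bounded_ae_differentiable \<Omega> u \<longleftrightarrow> bounded_borel u \<and>
     (\<exists>N\<in>null_sets lebesgue. \<exists>B. \<forall>x\<in>\<Omega> - N. \<exists>D. (u has_derivative D) (at x) \<and> (\<forall>b\<in>Basis. cmod (D b) \<le> B))"

lemma bounded_ae_differentiableE:
  assumes "bounded_ae_differentiable \<Omega> u"
  obtains N B where "bounded_borel u" "N \<in> null_sets lebesgue"
    "\<And>x. x \<in> \<Omega> - N \<Longrightarrow> (u has_derivative frechet_derivative u (at x)) (at x)"
    "\<And>x b. x \<in> \<Omega> - N \<Longrightarrow> b \<in> Basis \<Longrightarrow> cmod (frechet_derivative u (at x) b) \<le> B"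
proof -
  obtain N B where u: "bounded_borel u" and N: "N \<in> null_sets lebesgue"
    and H: "\<forall>x\<in>\<Omega> - N. \<exists>D. (u has_derivative D) (at x) \<and> (\<forall>b\<in>Basis. cmod (D b) \<le> B)"
    using assms unfolding bounded_ae_differentiable_def by blast
  have deriv: "(u has_derivative frechet_derivative u (at x)) (at x)" if "x \<in> \<Omega> - N" for x
    using H that frechet_derivative_at by metis
  have bound: "cmod (frechet_derivative u (at x) b) \<le> B" if "x \<in> \<Omega> - N" "b \<in> Basis" for x b
    using H that frechet_derivative_at by metis
  show ?thesis by (rule that[OF u N deriv bound])
qed

lemma bounded_ae_differentiable_bounded_borel:
  "bounded_ae_differentiable \<Omega> u \<Longrightarrow> bounded_borel u"
  unfolding bounded_ae_differentiable_def by blast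

lemma bounded_ae_differentiable_lincomb:
  assumes "bounded_ae_differentiable \<Omega> u" "bounded_ae_differentiable \<Omega> w"
  shows "bounded_ae_differentiable \<Omega> (\<lambda>x. a * u x + c * w x)"
proof -
  obtain N1 B1 where u: "bounded_borel u" "N1 \<in> null_sets lebesgue"
    "\<And>x. x \<in> \<Omega> - N1 \<Longrightarrow> (u has_derivative frechet_derivative u (at x)) (at x)"
    "\<And>x b. x \<in> \<Omega> - N1 \<Longrightarrow> b \<in> Basis \<Longrightarrow> cmod (frechet_derivative u (at x) b) \<le> B1"
    using bounded_ae_differentiableE[OF assms(1)] by metis
  obtain N2 B2 where w: "bounded_borel w" "N2 \<in> null_sets lebesgue"
    "\<And>x. x \<in> \<Omega> - N2 \<Longrightarrow> (w has_derivative frechet_derivative w (at x)) (at x)"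
    "\<And>x b. x \<in> \<Omega> - N2 \<Longrightarrow> b \<in> Basis \<Longrightarrow> cmod (frechet_derivative w (at x) b) \<le> B2"
    using bounded_ae_differentiableE[OF assms(2)] by metis
  have "\<exists>D. ((\<lambda>x. a * u x + c * w x) has_derivative D) (at x) \<and>
          (\<forall>b\<in>Basis. cmod (D b) \<le> cmod a * B1 + cmod c * B2)"
    if x: "x \<in> \<Omega> - (N1 \<union> N2)" for x
  proof (intro exI conjI ballI)
    show "((\<lambda>x. a * u x + c * w x) has_derivative
        (\<lambda>h. a * frechet_derivative u (at x) h + c * frechet_derivative w (at x) h)) (at x)"
      using x u(3) w(3) by (auto intro!: derivative_eq_intros)
    show "cmod (a * frechet_derivative u (at x) b + c * frechet_derivative w (at x) b) \<le> cmod a * B1 + cmod c * B2"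
      if "b \<in> Basis" for b
      using x that u(4) w(4)
      by (auto simp: norm_mult intro!: norm_triangle_le add_mono mult_left_mono)
  qed
  moreover have "bounded_borel (\<lambda>x. a * u x + c * w x)"
    using u(1) w(1) by (intro bounded_borel_add bounded_borel_mult_left)
  ultimately show ?thesis
    unfolding bounded_ae_differentiable_def using u(2) w(2) by blast
qed

lemma bounded_ae_differentiable_add:
  "bounded_ae_differentiable \<Omega> u \<Longrightarrow> bounded_ae_differentiable \<Omega> w \<Longrightarrow>
     bounded_ae_differentiable \<Omega> (\<lambda>x. u x + w x)"
  using bounded_ae_differentiable_lincomb[where a = 1 and c = 1] by simp

lemma bounded_ae_differentiable_diff:
  "bounded_ae_differentiable \<Omega> u \<Longrightarrow> bounded_ae_differentiable \<Omega> w \<Longrightarrow>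
     bounded_ae_differentiable \<Omega> (\<lambda>x. u x - w x)"
  using bounded_ae_differentiable_lincomb[where a = 1 and c = "-1"] by simp

lemma bounded_ae_differentiable_sum:
  assumes "finite I" "\<And>l. l \<in> I \<Longrightarrow> bounded_ae_differentiable \<Omega> (Q l)"
  shows "bounded_ae_differentiable \<Omega> (\<lambda>x. \<Sum>l\<in>I. Q l x)"
  using assms
proof (induction I rule: finite_induct)
  case empty
  show ?case
    unfolding bounded_ae_differentiable_def
    by (auto intro!: bexI[of _ "{}"] exI[of _ 0] exI[of _ "\<lambda>h. 0"] bounded_borel_const)
next
  case (insert a I)
  then show ?case by (simp add: bounded_ae_differentiable_add)
qed

lemma P1_space_bounded_borel:
  assumes "bounded \<Omega>" "u \<in> P1_space \<Omega> T"
  shows "bounded_borel u"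
proof -
  have c: "continuous_on (closure \<Omega>) u" and z: "\<And>x. x \<notin> closure \<Omega> \<Longrightarrow> u x = 0"
    using assms(2) by (auto simp: P1_space_def)
  have "(\<lambda>x. indicator (closure \<Omega>) x *\<^sub>R u x) \<in> borel_measurable borel"
    by (rule borel_measurable_continuous_on_indicator) (auto simp: c)
  moreover have "(\<lambda>x. indicator (closure \<Omega>) x *\<^sub>R u x) = u"
    using z by (auto simp: indicator_def)
  moreover obtain B where "\<And>y. y \<in> u ` closure \<Omega> \<Longrightarrow> norm y \<le> B"
    using compact_continuous_image[OF c] assms(1) compact_closure compact_imp_bounded bounded_iff
    by metis
  then have "norm (u x) \<le> max B 0" for x
    using z[of x] by (cases "x \<in> closure \<Omega>") force+
  ultimately show ?thesis
    by (intro bounded_borelI) auto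
qed

lemma has_derivative_affine_on_interior:
  fixes L :: "'a::euclidean_space \<Rightarrow> 'b::real_normed_vector"
  assumes "linear L" "\<And>y. y \<in> K \<Longrightarrow> u y = L y + c" "x \<in> interior K"
  shows "(u has_derivative L) (at x)"
proof -
  have "((\<lambda>y. L y + c) has_derivative L) (at x)"
    using assms(1)
    by (auto intro!: derivative_eq_intros bounded_linear_imp_has_derivative simp: linear_conv_bounded_linear)
  then show ?thesis
    by (rule has_derivative_transform_within_open[OF _ open_interior assms(3)])
       (use assms(2) interior_subset in force)
qed

lemma P1_space_bounded_ae_differentiable:
  fixes \<Omega> :: "'a::euclidean_space set"
  assumes "bounded \<Omega>" "simplicial_mesh \<Omega> T" "u \<in> P1_space \<Omega> T"
  shows "bounded_ae_differentiable \<Omega> u"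
proof -
  have fin: "finite T" and cov: "(\<Union>S\<in>T. convex hull S) = closure \<Omega>"
    and fS: "\<And>S. S \<in> T \<Longrightarrow> finite S"
    using assms(2) by (auto simp: simplicial_mesh_def)
  have "\<forall>S\<in>T. \<exists>L c. linear (L :: 'a \<Rightarrow> complex) \<and> (\<forall>x \<in> convex hull S. u x = L x + c)"
    using assms(3) by (auto simp: P1_space_def)
  then obtain L c where L: "\<And>S. S \<in> T \<Longrightarrow> linear (L S)"
    and uL: "\<And>S x. S \<in> T \<Longrightarrow> x \<in> convex hull S \<Longrightarrow> u x = L S x + c S"
    by metis
  define N where "N = (\<Union>S\<in>T. frontier (convex hull S))"
  define B where "B = (\<Sum>S\<in>T. \<Sum>b\<in>Basis. cmod (L S b))"
  have "N \<in> null_sets lebesgue"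
    unfolding N_def using fin
    by (intro null_sets.finite_UN) (auto simp: negligible_iff_null_sets[symmetric] intro!: negligible_convex_frontier)
  moreover have "\<exists>D. (u has_derivative D) (at x) \<and> (\<forall>b\<in>Basis. cmod (D b) \<le> B)" if x: "x \<in> \<Omega> - N" for x
  proof -
    obtain S where S: "S \<in> T" "x \<in> convex hull S"
      using x cov closure_subset by blast
    have "closed (convex hull S)"
      using fS[OF S(1)] by (simp add: compact_imp_closed finite_imp_compact_convex_hull)
    then have "x \<in> interior (convex hull S)"
      using S x unfolding N_def frontier_def by auto
    then have "(u has_derivative L S) (at x)"
      using L[OF S(1)] uL[OF S(1)] by (intro has_derivative_affine_on_interior)
    moreover have "cmod (L S b) \<le> B" if "b \<in> Basis" for b
    proof -
      have "cmod (L S b) \<le> (\<Sum>b'\<in>Basis. cmod (L S b'))"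
        using that by (intro member_le_sum) auto
      also have "\<dots> \<le> B"
        unfolding B_def using S(1) fin by (intro member_le_sum) (auto intro: sum_nonneg)
      finally show ?thesis .
    qed
    ultimately show ?thesis by blast
  qed
  ultimately show ?thesis
    unfolding bounded_ae_differentiable_def using P1_space_bounded_borel[OF assms(1,3)] by blast
qed

lemma tendsto_difference_quotient:
  fixes u :: "'a::real_normed_vector \<Rightarrow> 'b::real_normed_field"
  assumes u: "(u has_derivative D) (at x)" and b: "norm b = 1"
  shows "(\<lambda>n. (u (x + (1 / real (Suc n)) *\<^sub>R b) - u x) * of_real (real (Suc n))) \<longlonglongrightarrow> D b"
proof -
  define h where "h n = (1 / real (Suc n)) *\<^sub>R b" for n
  have D: "bounded_linear D" and lim: "((\<lambda>h. norm (u (x + h) - u x - D h) / norm h) \<longlongrightarrow> 0) (at 0)"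
    using u by (auto simp: has_derivative_at)
  have "h \<longlonglongrightarrow> 0"
    unfolding h_def using LIMSEQ_Suc[OF lim_const_over_n[of 1]] by (auto intro: tendsto_eq_intros)
  moreover have "h n \<noteq> 0" for n
    using b by (auto simp: h_def)
  ultimately have "filterlim h (at 0) sequentially"
    by (intro filterlim_atI) auto
  from filterlim_compose[OF lim this]
  have "(\<lambda>n. norm (u (x + h n) - u x - D (h n)) / norm (h n)) \<longlonglongrightarrow> 0" .
  moreover have "norm (u (x + h n) - u x - D (h n)) / norm (h n)
      = norm ((u (x + h n) - u x) * of_real (real (Suc n)) - D b)" for n
  proof -
    have "D (h n) * of_real (real (Suc n)) = D b"
      unfolding h_def linear_scale[OF bounded_linear.linear[OF D]] scaleR_conv_of_real
      by (simp add: of_real_def del: of_real_of_nat_eq)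
    then have "(u (x + h n) - u x) * of_real (real (Suc n)) - D b
        = (u (x + h n) - u x - D (h n)) * of_real (real (Suc n))"
      by (simp add: algebra_simps)
    then have "norm ((u (x + h n) - u x) * of_real (real (Suc n)) - D b)
        = norm (u (x + h n) - u x - D (h n)) * real (Suc n)"
      by (simp only: norm_mult norm_of_real abs_of_nat)
    moreover have "norm (h n) = 1 / real (Suc n)"
      using b by (simp add: h_def)
    ultimately show ?thesis by simp
  qed
  ultimately have "(\<lambda>n. (u (x + h n) - u x) * of_real (real (Suc n)) - D b) \<longlonglongrightarrow> 0"
    by (simp add: tendsto_norm_zero_iff)
  then show ?thesis
    unfolding h_def by (simp add: Lim_null[symmetric])
qed

lemma borel_measurable_frechet_derivative_on:
  assumes u: "bounded_ae_differentiable \<Omega> u" and \<Omega>: "\<Omega> \<in> sets borel" and b: "b \<in> Basis"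
  shows "(\<lambda>x. indicator \<Omega> x *\<^sub>R frechet_derivative u (at x) b) \<in> borel_measurable lebesgue"
proof -
  obtain N B where "bounded_borel u" and N: "N \<in> null_sets lebesgue"
    and du: "\<And>x. x \<in> \<Omega> - N \<Longrightarrow> (u has_derivative frechet_derivative u (at x)) (at x)"
    using bounded_ae_differentiableE[OF u] by metis
  then have [measurable]: "u \<in> borel_measurable borel"
    by (metis bounded_borelE)
  \<comment> \<open>outside N the partial derivative is the limit of Borel measurable difference quotients\<close>
  define q where "q n x = (u (x + (1 / real (Suc n)) *\<^sub>R b) - u x) * of_real (real (Suc n))" for n x
  have [measurable]: "q n \<in> borel_measurable borel" for n
    unfolding q_def by measurable
  have "(\<lambda>x. indicator \<Omega> x *\<^sub>R lim (\<lambda>n. q n x)) \<in> borel_measurable lebesgue"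
    using \<Omega> by (intro measurable_completion) (simp add: measurable_lborel1)
  moreover have "lim (\<lambda>n. q n x) = frechet_derivative u (at x) b" if "x \<in> \<Omega> - N" for x
    using that b unfolding q_def by (intro limI tendsto_difference_quotient du) auto
  then have "AE x in lebesgue. indicator \<Omega> x *\<^sub>R lim (\<lambda>n. q n x) = indicator \<Omega> x *\<^sub>R frechet_derivative u (at x) b"
    by (intro AE_I'[OF N]) (auto simp: indicator_def)
  ultimately show ?thesis by (rule borel_measurable_AE)
qed

definition grad_integrand :: "('a::euclidean_space \<Rightarrow> complex) \<Rightarrow> ('a \<Rightarrow> complex) \<Rightarrow> 'a \<Rightarrow> complex" where
  "grad_integrand u w x = (\<Sum>b\<in>Basis. frechet_derivative u (at x) b * cnj (frechet_derivative w (at x) b))"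

lemma grad_form_eq: "grad_form \<Omega> u w = (LINT x:\<Omega>|lebesgue. grad_integrand u w x)"
  unfolding grad_form_def grad_integrand_def ..

lemma set_integrable_grad_integrand:
  assumes u: "bounded_ae_differentiable \<Omega> u" and w: "bounded_ae_differentiable \<Omega> w"
    and \<Omega>: "open \<Omega>" "bounded \<Omega>"
  shows "set_integrable lebesgue \<Omega> (grad_integrand u w)"
proof -
  obtain N1 B1 where N1: "N1 \<in> null_sets lebesgue"
    and B1: "\<And>x b. x \<in> \<Omega> - N1 \<Longrightarrow> b \<in> Basis \<Longrightarrow> cmod (frechet_derivative u (at x) b) \<le> B1"
    using bounded_ae_differentiableE[OF u] by metis
  obtain N2 B2 where N2: "N2 \<in> null_sets lebesgue"
    and B2: "\<And>x b. x \<in> \<Omega> - N2 \<Longrightarrow> b \<in> Basis \<Longrightarrow> cmod (frechet_derivative w (at x) b) \<le> B2"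
    using bounded_ae_differentiableE[OF w] by metis
  have \<Omega>_sets: "\<Omega> \<in> sets borel" using \<Omega>(1) by simp
  note [measurable] = borel_measurable_frechet_derivative_on[OF u \<Omega>_sets]
    borel_measurable_frechet_derivative_on[OF w \<Omega>_sets]
  have "(\<lambda>x. indicator \<Omega> x *\<^sub>R grad_integrand u w x)
      = (\<lambda>x. \<Sum>b\<in>Basis. (indicator \<Omega> x *\<^sub>R frechet_derivative u (at x) b)
                        * cnj (indicator \<Omega> x *\<^sub>R frechet_derivative w (at x) b))"
    by (auto simp: grad_integrand_def indicator_def)
  also have "\<dots> \<in> borel_measurable lebesgue"
    by measurable
  finally have meas: "(\<lambda>x. indicator \<Omega> x *\<^sub>R grad_integrand u w x) \<in> borel_measurable lebesgue" .
  have bound: "cmod (grad_integrand u w x) \<le> real DIM('a) * (B1 * B2)"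
    if "x \<in> \<Omega>" "x \<notin> N1" "x \<notin> N2" for x
  proof -
    have "cmod (grad_integrand u w x)
        \<le> (\<Sum>b\<in>(Basis::'a set). cmod (frechet_derivative u (at x) b) * cmod (frechet_derivative w (at x) b))"
      unfolding grad_integrand_def by (rule order_trans[OF norm_sum]) (simp add: norm_mult)
    also have "\<dots> \<le> (\<Sum>b\<in>(Basis::'a set). B1 * B2)"
      using that B1 B2 by (intro sum_mono mult_mono) (auto intro: order_trans[OF norm_ge_zero])
    finally show ?thesis by simp
  qed
  have "\<Omega> \<in> lmeasurable" using \<Omega> by (simp add: lmeasurable_open)
  then show ?thesis
    unfolding set_integrable_def
    by (intro integrableI_bounded_set[where A = \<Omega> and B = "real DIM('a) * (B1 * B2)"] meas
          AE_I'[OF null_sets.Un[OF N1 N2]])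
       (auto simp: fmeasurable_def intro: ccontr dest: bound)
qed

lemma grad_form_add_left:
  assumes u1: "bounded_ae_differentiable \<Omega> u1" and u2: "bounded_ae_differentiable \<Omega> u2"
    and w: "bounded_ae_differentiable \<Omega> w" and \<Omega>: "open \<Omega>" "bounded \<Omega>"
  shows "grad_form \<Omega> (\<lambda>x. u1 x + u2 x) w = grad_form \<Omega> u1 w + grad_form \<Omega> u2 w"
proof -
  obtain N1 where N1: "N1 \<in> null_sets lebesgue"
    and d1: "\<And>x. x \<in> \<Omega> - N1 \<Longrightarrow> (u1 has_derivative frechet_derivative u1 (at x)) (at x)"
    using bounded_ae_differentiableE[OF u1] by metis
  obtain N2 where N2: "N2 \<in> null_sets lebesgue"
    and d2: "\<And>x. x \<in> \<Omega> - N2 \<Longrightarrow> (u2 has_derivative frechet_derivative u2 (at x)) (at x)"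
    using bounded_ae_differentiableE[OF u2] by metis
  have i1: "set_integrable lebesgue \<Omega> (grad_integrand u1 w)"
    and i2: "set_integrable lebesgue \<Omega> (grad_integrand u2 w)"
    and i: "set_integrable lebesgue \<Omega> (grad_integrand (\<lambda>x. u1 x + u2 x) w)"
    using u1 u2 w \<Omega> by (auto intro: set_integrable_grad_integrand bounded_ae_differentiable_add)
  have "grad_integrand (\<lambda>x. u1 x + u2 x) w x = grad_integrand u1 w x + grad_integrand u2 w x"
    if "x \<in> \<Omega> - (N1 \<union> N2)" for x
  proof -
    have "frechet_derivative (\<lambda>x. u1 x + u2 x) (at x)
        = (\<lambda>h. frechet_derivative u1 (at x) h + frechet_derivative u2 (at x) h)"
      using that d1 d2 by (intro frechet_derivative_at[symmetric] has_derivative_add) auto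
    then show ?thesis
      unfolding grad_integrand_def by (simp add: distrib_right sum.distrib)
  qed
  then have "AE x in lebesgue. indicator \<Omega> x *\<^sub>R grad_integrand (\<lambda>x. u1 x + u2 x) w x
      = indicator \<Omega> x *\<^sub>R grad_integrand u1 w x + indicator \<Omega> x *\<^sub>R grad_integrand u2 w x"
    by (intro AE_I'[OF null_sets.Un[OF N1 N2]]) (auto simp: indicator_def)
  then have "grad_form \<Omega> (\<lambda>x. u1 x + u2 x) w = (LINT x:\<Omega>|lebesgue. grad_integrand u1 w x + grad_integrand u2 w x)"
    unfolding grad_form_eq set_lebesgue_integral_def scaleR_add_right
    using i1 i2 i unfolding set_integrable_def
    by (intro integral_cong_AE) (auto intro: borel_measurable_integrable)
  also have "\<dots> = grad_form \<Omega> u1 w + grad_form \<Omega> u2 w"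
    unfolding grad_form_eq using i1 i2 by (rule set_integral_add)
  finally show ?thesis .
qed

lemma cnj_grad_form: "cnj (grad_form \<Omega> u w) = grad_form \<Omega> w u"
proof -
  have "cnj (indicator \<Omega> x *\<^sub>R grad_integrand u w x) = indicator \<Omega> x *\<^sub>R grad_integrand w u x" for x
    by (simp add: grad_integrand_def cnj_sum mult.commute)
  then show ?thesis
    unfolding grad_form_eq set_lebesgue_integral_def Bochner_Integration.integral_cnj[symmetric]
    by (simp only:)
qed

lemma L2_form_add_left:
  assumes "bounded_borel u1" "bounded_borel u2" "bounded_borel w" "S \<in> sets lebesgue" "bounded S"
  shows "L2_form S (\<lambda>x. u1 x + u2 x) w = L2_form S u1 w + L2_form S u2 w"
  unfolding L2_form_def distrib_right
  using assms by (intro set_integral_add set_integrable_bounded_borel bounded_borel_mult_cnj)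

lemma cnj_L2_form: "cnj (L2_form S u w) = L2_form S w u"
proof -
  have "cnj (indicator S x *\<^sub>R (u x * cnj (w x))) = indicator S x *\<^sub>R (w x * cnj (u x))" for x
    by (simp add: mult.commute)
  then show ?thesis
    unfolding L2_form_def set_lebesgue_integral_def Bochner_Integration.integral_cnj[symmetric]
    by (simp only:)
qed

lemma L2_form_self: "L2_form S u u = complex_of_real (LINT x:S|lebesgue. (cmod (u x))\<^sup>2)"
  unfolding L2_form_def set_integral_complex_of_real[symmetric] complex_norm_square ..

lemma grad_form_self:
  "grad_form \<Omega> u u = complex_of_real (LINT x:\<Omega>|lebesgue. (\<Sum>b\<in>Basis. (cmod (frechet_derivative u (at x) b))\<^sup>2))"
  unfolding grad_form_def set_integral_complex_of_real[symmetric] of_real_sum complex_norm_square ..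

lemma ip1k_add_left:
  assumes "bounded_ae_differentiable \<Omega> u1" "bounded_ae_differentiable \<Omega> u2"
    "bounded_ae_differentiable \<Omega> w" "open \<Omega>" "bounded \<Omega>"
  shows "ip1k \<Omega> k (\<lambda>x. u1 x + u2 x) w = ip1k \<Omega> k u1 w + ip1k \<Omega> k u2 w"
proof -
  have "L2_form \<Omega> (\<lambda>x. u1 x + u2 x) w = L2_form \<Omega> u1 w + L2_form \<Omega> u2 w"
    using assms by (intro L2_form_add_left bounded_ae_differentiable_bounded_borel) auto
  then show ?thesis
    unfolding ip1k_def grad_form_add_left[OF assms] by (simp add: algebra_simps)
qed

lemma ip1k_diff_left:
  assumes "bounded_ae_differentiable \<Omega> u1" "bounded_ae_differentiable \<Omega> u2"
    "bounded_ae_differentiable \<Omega> w" "open \<Omega>" "bounded \<Omega>"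
  shows "ip1k \<Omega> k (\<lambda>x. u1 x - u2 x) w = ip1k \<Omega> k u1 w - ip1k \<Omega> k u2 w"
  using ip1k_add_left[OF bounded_ae_differentiable_diff[OF assms(1,2)] assms(2-5), of k] by simp

lemma ip1k_sum_left:
  assumes "finite I" "\<And>l. l \<in> I \<Longrightarrow> bounded_ae_differentiable \<Omega> (Q l)"
    "bounded_ae_differentiable \<Omega> w" "open \<Omega>" "bounded \<Omega>"
  shows "ip1k \<Omega> k (\<lambda>x. \<Sum>l\<in>I. Q l x) w = (\<Sum>l\<in>I. ip1k \<Omega> k (Q l) w)"
  using assms(1,2)
proof (induction I rule: finite_induct)
  case empty
  \<comment> \<open>additivity in the first argument forces the form to vanish at 0\<close>
  have "ip1k \<Omega> k (\<lambda>x. 0) w = ip1k \<Omega> k (\<lambda>x. 0 + 0) w" by simp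
  also have "\<dots> = ip1k \<Omega> k (\<lambda>x. 0) w + ip1k \<Omega> k (\<lambda>x. 0) w"
    using assms(3-5) bounded_ae_differentiable_sum[of "{}" \<Omega>]
    by (intro ip1k_add_left) auto
  finally show ?case by simp
next
  case (insert a I)
  then show ?case
    using assms(3-5) by (simp add: ip1k_add_left bounded_ae_differentiable_sum)
qed

lemma cnj_ip1k: "cnj (ip1k \<Omega> k u w) = ip1k \<Omega> k w u"
  unfolding ip1k_def by (simp add: cnj_grad_form cnj_L2_form)

lemma ip1k_sum_right:
  assumes "finite I" "bounded_ae_differentiable \<Omega> v" "\<And>l. l \<in> I \<Longrightarrow> bounded_ae_differentiable \<Omega> (Q l)"
    "open \<Omega>" "bounded \<Omega>"
  shows "ip1k \<Omega> k v (\<lambda>x. \<Sum>l\<in>I. Q l x) = (\<Sum>l\<in>I. ip1k \<Omega> k v (Q l))"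
  using arg_cong[OF ip1k_sum_left[OF assms(1,3,2,4,5), where k = k], where f = cnj]
  by (simp add: cnj_ip1k cnj_sum)

lemma ip1k_self: "ip1k \<Omega> k u u = complex_of_real ((norm1k \<Omega> k u)\<^sup>2)"
proof -
  define g where "g = (LINT x:\<Omega>|lebesgue. (\<Sum>b\<in>Basis. (cmod (frechet_derivative u (at x) b))\<^sup>2))"
  define l where "l = (LINT x:\<Omega>|lebesgue. (cmod (u x))\<^sup>2)"
  have "ip1k \<Omega> k u u = complex_of_real (g + k\<^sup>2 * l)"
    unfolding ip1k_def grad_form_self L2_form_self g_def l_def by simp
  moreover have "0 \<le> g + k\<^sup>2 * l"
    unfolding g_def l_def set_lebesgue_integral_def
    by (intro add_nonneg_nonneg mult_nonneg_nonneg Bochner_Integration.integral_nonneg)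
       (auto intro!: mult_nonneg_nonneg sum_nonneg)
  ultimately show ?thesis unfolding norm1k_def by simp
qed

lemma a_eps_add_left:
  assumes "bounded_ae_differentiable \<Omega> u1" "bounded_ae_differentiable \<Omega> u2"
    "bounded_ae_differentiable \<Omega> w" "open \<Omega>" "bounded \<Omega>"
  shows "a_eps \<Omega> T k \<epsilon> \<eta> (\<lambda>x. u1 x + u2 x) w = a_eps \<Omega> T k \<epsilon> \<eta> u1 w + a_eps \<Omega> T k \<epsilon> \<eta> u2 w"
proof -
  have bb: "bounded_borel u1" "bounded_borel u2" "bounded_borel w"
    using assms(1-3) by (auto intro: bounded_ae_differentiable_bounded_borel)
  have "\<Omega> \<in> sets lebesgue"
    using assms(4,5) by (intro fmeasurableD lmeasurable_open)
  with bb have "L2_form \<Omega> (\<lambda>x. u1 x + u2 x) w = L2_form \<Omega> u1 w + L2_form \<Omega> u2 w"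
    using assms(5) by (intro L2_form_add_left)
  moreover have "bdry_integral \<Omega> T (frontier \<Omega>) (\<lambda>x. (u1 x + u2 x) * cnj (w x))
      = bdry_integral \<Omega> T (frontier \<Omega>) (\<lambda>x. u1 x * cnj (w x)) + bdry_integral \<Omega> T (frontier \<Omega>) (\<lambda>x. u2 x * cnj (w x))"
    unfolding distrib_right using bb by (intro bdry_integral_add bounded_borel_mult_cnj) auto
  ultimately show ?thesis
    unfolding a_eps_def grad_form_add_left[OF assms] by (simp add: algebra_simps)
qed

lemma a_eps_diff_left:
  assumes "bounded_ae_differentiable \<Omega> u1" "bounded_ae_differentiable \<Omega> u2"
    "bounded_ae_differentiable \<Omega> w" "open \<Omega>" "bounded \<Omega>"
  shows "a_eps \<Omega> T k \<epsilon> \<eta> (\<lambda>x. u1 x - u2 x) w = a_eps \<Omega> T k \<epsilon> \<eta> u1 w - a_eps \<Omega> T k \<epsilon> \<eta> u2 w"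
  using a_eps_add_left[OF bounded_ae_differentiable_diff[OF assms(1,2)] assms(2-5), of T k \<epsilon> \<eta>]
  by simp

lemma closure_subset_subgraph_over_hyperplane:
  fixes \<nu> :: "'a::euclidean_space"
  assumes "norm \<nu> = 1" "continuous_on {y. y \<bullet> \<nu> = 0} g"
    and "\<Omega> \<inter> ball x0 r = {x \<in> ball x0 r. x \<bullet> \<nu> < g (x - (x \<bullet> \<nu>) *\<^sub>R \<nu>)}"
  shows "closure \<Omega> \<inter> ball x0 r \<subseteq> {x. x \<bullet> \<nu> \<le> g (x - (x \<bullet> \<nu>) *\<^sub>R \<nu>)}"
proof -
  have "(\<lambda>x. x - (x \<bullet> \<nu>) *\<^sub>R \<nu>) ` UNIV \<subseteq> {y. y \<bullet> \<nu> = 0}"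
    using assms(1) by (auto simp: inner_diff_left norm_eq_1)
  then have "continuous_on UNIV (\<lambda>x. g (x - (x \<bullet> \<nu>) *\<^sub>R \<nu>))"
    by (intro continuous_on_compose2[OF assms(2)] continuous_intros)
  then have closed: "closed {x. x \<bullet> \<nu> \<le> g (x - (x \<bullet> \<nu>) *\<^sub>R \<nu>)}"
    by (intro closed_Collect_le) (auto intro: continuous_intros)
  have "closure \<Omega> \<inter> ball x0 r \<subseteq> closure (ball x0 r \<inter> \<Omega>)"
    using open_Int_closure_subset[of "ball x0 r" \<Omega>] by blast
  also have "\<dots> \<subseteq> {x. x \<bullet> \<nu> \<le> g (x - (x \<bullet> \<nu>) *\<^sub>R \<nu>)}"
  proof (rule closure_minimal[OF _ closed], rule subsetI)
    fix x assume "x \<in> ball x0 r \<inter> \<Omega>"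
    then have "x \<in> \<Omega> \<inter> ball x0 r" by blast
    then show "x \<in> {x. x \<bullet> \<nu> \<le> g (x - (x \<bullet> \<nu>) *\<^sub>R \<nu>)}"
      unfolding assms(3) by simp
  qed
  finally show ?thesis .
qed

lemma lipschitz_domain_frontier_not_interior_closure:
  fixes \<Omega> :: "'a::euclidean_space set"
  assumes "open \<Omega>" "lipschitz_domain \<Omega>" "x0 \<in> frontier \<Omega>"
  shows "x0 \<notin> interior (closure \<Omega>)"
proof
  assume "x0 \<in> interior (closure \<Omega>)"
  then obtain e where e: "e > 0" "ball x0 e \<subseteq> closure \<Omega>"
    using mem_interior by blast
  obtain r \<nu> Lc g where r: "r > 0" and \<nu>: "norm \<nu> = 1"
    and lip: "Lc-lipschitz_on {y. y \<bullet> \<nu> = 0} (g :: 'a \<Rightarrow> real)"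
    and eq: "\<Omega> \<inter> ball x0 r = {x \<in> ball x0 r. x \<bullet> \<nu> < g (x - (x \<bullet> \<nu>) *\<^sub>R \<nu>)}"
    using assms(2,3) unfolding lipschitz_domain_def by blast
  note subgraph = closure_subset_subgraph_over_hyperplane[OF \<nu> lipschitz_on_continuous_on[OF lip] eq]
  have "x0 \<notin> \<Omega> \<inter> ball x0 r"
    using assms(1,3) by (simp add: frontier_def interior_open)
  then have below: "g (x0 - (x0 \<bullet> \<nu>) *\<^sub>R \<nu>) \<le> x0 \<bullet> \<nu>"
    unfolding eq using r by (simp add: not_less)
  \<comment> \<open>but a point slightly above x0 in direction nu still lies in the closure of Omega\<close>
  define t where "t = min r e / 2"
  define y where "y = x0 + t *\<^sub>R \<nu>"
  have "dist x0 y = t"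
    using \<nu> r e by (simp add: y_def dist_norm t_def)
  then have "y \<in> closure \<Omega> \<inter> ball x0 r"
    using e r by (auto simp: t_def)
  then have "y \<bullet> \<nu> \<le> g (y - (y \<bullet> \<nu>) *\<^sub>R \<nu>)"
    using subgraph by blast
  moreover have y\<nu>: "y \<bullet> \<nu> = x0 \<bullet> \<nu> + t"
    using \<nu> by (simp add: y_def inner_add_left norm_eq_1)
  moreover have "y - (y \<bullet> \<nu>) *\<^sub>R \<nu> = x0 - (x0 \<bullet> \<nu>) *\<^sub>R \<nu>"
    unfolding y\<nu> by (simp add: y_def scaleR_add_left)
  ultimately have "x0 \<bullet> \<nu> + t \<le> g (x0 - (x0 \<bullet> \<nu>) *\<^sub>R \<nu>)"
    by (simp only:)
  moreover have "t > 0"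
    using r e by (simp add: t_def)
  ultimately show False
    using below by linarith
qed

lemma frontier_Int_closure_subset_frontier:
  fixes \<Omega> :: "'a::euclidean_space set"
  assumes "open \<Omega>" "lipschitz_domain \<Omega>" "open U" "U \<subseteq> interior (closure \<Omega>)"
  shows "frontier \<Omega> \<inter> closure U \<subseteq> frontier U"
  using lipschitz_domain_frontier_not_interior_closure[OF assms(1,2)] assms(3,4)
  by (auto simp: frontier_def interior_open)

lemma null_sets_frontier_interior_convex_hulls:
  assumes "finite A" "\<And>S. S \<in> A \<Longrightarrow> finite (S :: 'a::euclidean_space set)"
  shows "frontier (interior (\<Union>S\<in>A. convex hull S)) \<in> null_sets lebesgue"
proof -
  have closed: "closed (convex hull S)" if "S \<in> A" for S
    using assms(2)[OF that] by (simp add: compact_imp_closed finite_imp_compact_convex_hull)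
  define X where "X = (\<Union>S\<in>A. convex hull S)"
  have "closed X"
    unfolding X_def using assms(1) closed by (intro closed_UN) auto
  have "frontier X \<subseteq> (\<Union>S\<in>A. frontier (convex hull S))"
  proof
    fix x assume x: "x \<in> frontier X"
    then obtain S where S: "S \<in> A" "x \<in> convex hull S"
      using \<open>closed X\<close> unfolding X_def frontier_def by auto
    have "interior (convex hull S) \<subseteq> interior X"
      unfolding X_def using S(1) by (intro interior_mono) auto
    then have "x \<in> frontier (convex hull S)"
      using x S closed[OF S(1)] by (auto simp: frontier_def)
    then show "x \<in> (\<Union>S\<in>A. frontier (convex hull S))"
      using S(1) by blast
  qed
  moreover have "(\<Union>S\<in>A. frontier (convex hull S)) \<in> null_sets lebesgue"
    using assms(1)
    by (intro null_sets.finite_UN) (auto simp: negligible_iff_null_sets[symmetric] intro!: negligible_convex_frontier)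
  ultimately have "frontier X \<in> null_sets lebesgue"
    by (rule completion.complete2)
  then show ?thesis
    unfolding X_def[symmetric] using frontier_interior_subset completion.complete2 by blast
qed

lemma L2_norm_on_le_of_subset_closure:
  fixes h :: "'a::euclidean_space \<Rightarrow> complex"
  assumes "bounded_borel h" "S \<subseteq> closure U" "S \<in> sets lebesgue" "bounded S"
    "open U" "bounded U" "frontier U \<in> null_sets lebesgue"
  shows "L2_norm_on S h \<le> L2_norm_on U h"
proof -
  have h2: "bounded_borel (\<lambda>x. (cmod (h x))\<^sup>2)"
    using assms(1) by (rule bounded_borel_norm_power2)
  have "U \<in> sets lebesgue"
    using assms(5,6) by (intro fmeasurableD lmeasurable_open)
  then have U: "set_integrable lebesgue U (\<lambda>x. (cmod (h x))\<^sup>2)"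
    using h2 assms(6) by (intro set_integrable_bounded_borel)
  have "set_integrable lebesgue S (\<lambda>x. (cmod (h x))\<^sup>2)"
    using h2 assms(3,4) by (rule set_integrable_bounded_borel)
  moreover note U
  \<comment> \<open>S differs from a subset of U only within the null set frontier U\<close>
  moreover have "indicator S x *\<^sub>R (cmod (h x))\<^sup>2 \<le> indicator U x *\<^sub>R (cmod (h x))\<^sup>2"
    if "x \<notin> frontier U" for x
  proof (cases "x \<in> S")
    case True
    then have "x \<in> U"
      using that assms(2,5) by (auto simp: frontier_def interior_open)
    then show ?thesis using True by simp
  qed (simp add: indicator_def)
  then have "AE x in lebesgue. indicator S x *\<^sub>R (cmod (h x))\<^sup>2 \<le> indicator U x *\<^sub>R (cmod (h x))\<^sup>2"
    by (intro AE_I'[OF assms(7)]) blast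
  ultimately have "(LINT x:S|lebesgue. (cmod (h x))\<^sup>2) \<le> (LINT x:U|lebesgue. (cmod (h x))\<^sup>2)"
    unfolding set_lebesgue_integral_def set_integrable_def by (rule integral_mono_AE)
  then show ?thesis
    unfolding L2_norm_on_def by (rule real_sqrt_le_mono)
qed

lemma L2_norm_on_nonneg: "0 \<le> L2_norm_on S h"
  unfolding L2_norm_on_def set_lebesgue_integral_def
  by (intro real_sqrt_ge_zero Bochner_Integration.integral_nonneg) auto

lemma eq_0_if_supp_subset:
  assumes "supp q \<subseteq> K" "x \<notin> K"
  shows "q x = 0"
proof -
  have "{x. q x \<noteq> 0} \<subseteq> K"
    using order_trans[OF closure_subset assms(1)[unfolded supp_def]] .
  then show ?thesis
    using assms(2) by blast
qed

lemma interior_simplices_in_mesh: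
  fixes \<Omega> :: "'a::euclidean_space set"
  assumes "bounded \<Omega>" "simplicial_mesh \<Omega> T" "A \<subseteq> T"
  defines "U \<equiv> interior (\<Union>S\<in>A. convex hull S)"
  shows "open U" "bounded U" "U \<subseteq> interior (closure \<Omega>)" "frontier U \<in> null_sets lebesgue"
proof -
  have "(\<Union>S\<in>T. convex hull S) = closure \<Omega>"
    using assms(2) by (simp add: simplicial_mesh_def)
  then have "(\<Union>S\<in>A. convex hull S) \<subseteq> closure \<Omega>"
    using assms(3) by blast
  then show U_int: "U \<subseteq> interior (closure \<Omega>)"
    unfolding U_def by (rule interior_mono)
  show "open U"
    unfolding U_def by simp
  show "bounded U"
    using U_int interior_subset by (intro bounded_subset[OF bounded_closure[OF assms(1)]]) blast
  show "frontier U \<in> null_sets lebesgue"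
    unfolding U_def using assms(2,3) finite_subset
    by (intro null_sets_frontier_interior_convex_hulls) (auto simp: simplicial_mesh_def)
qed

lemma norm_L2_form_le_on_support:
  fixes f q :: "'a::euclidean_space \<Rightarrow> complex"
  assumes f: "bounded_borel f" and q: "bounded_borel q" and q0: "\<And>x. x \<notin> closure U \<Longrightarrow> q x = 0"
    and \<Omega>: "open \<Omega>" "bounded \<Omega>" and U: "open U" "bounded U" "frontier U \<in> null_sets lebesgue"
  shows "cmod (L2_form \<Omega> f q) \<le> L2_norm_on U f * L2_norm_on U q"
proof -
  define S where "S = \<Omega> \<inter> closure U"
  have S: "S \<in> sets lebesgue" "bounded S" "S \<subseteq> closure U"
    unfolding S_def using \<Omega> by (auto intro: bounded_Int)
  have "L2_form \<Omega> f q = L2_form S f q"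
    unfolding L2_form_def set_lebesgue_integral_def S_def
    by (intro Bochner_Integration.integral_cong) (auto simp: indicator_def q0)
  also have "cmod \<dots> \<le> L2_norm_on S f * L2_norm_on S q"
    using f q S(1,2) by (rule norm_L2_form_le)
  also have "\<dots> \<le> L2_norm_on U f * L2_norm_on U q"
    using f q S U by (intro mult_mono L2_norm_on_le_of_subset_closure L2_norm_on_nonneg)
  finally show ?thesis .
qed

lemma bdry_integral_eq_on_support:
  assumes "\<And>x. x \<notin> closure U \<Longrightarrow> q x = 0" "frontier \<Omega> \<inter> closure U \<subseteq> frontier U"
  shows "bdry_integral \<Omega> T (frontier \<Omega>) (\<lambda>x. f x * cnj (q x))
           = bdry_integral \<Omega> T (frontier \<Omega> \<inter> frontier U) (\<lambda>x. f x * cnj (q x))"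
proof -
  have "indicator (frontier \<Omega>) x *\<^sub>R (f x * cnj (q x))
      = indicator (frontier \<Omega> \<inter> frontier U) x *\<^sub>R (f x * cnj (q x))" for x
    using assms by (cases "x \<in> closure U") (auto simp: indicator_def)
  then show ?thesis
    unfolding bdry_integral_def by (simp only:)
qed

lemma ip1k_eq_if_a_eps_eq_zero:
  assumes "a_eps \<Omega> T k \<epsilon> \<eta> f q = 0"
  shows "ip1k \<Omega> k f q = (of_real (2 * k\<^sup>2) + \<i> * of_real \<epsilon>) * L2_form \<Omega> f q
                          + \<i> * \<eta> * bdry_integral \<Omega> T (frontier \<Omega>) (\<lambda>x. f x * cnj (q x))"
  using assms unfolding a_eps_def ip1k_def by (simp add: algebra_simps)

lemma norm_residual_le:
  fixes k \<epsilon> c1 c2 X Y :: real and \<eta> L B :: complex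
  assumes "k > 0" "\<bar>\<epsilon>\<bar> \<le> c1 * k\<^sup>2" "cmod \<eta> \<le> c2 * k" "cmod L \<le> X" "cmod B \<le> Y"
  shows "cmod ((of_real (2 * k\<^sup>2) + \<i> * of_real \<epsilon>) * L + \<i> * \<eta> * B)
           \<le> (2 + \<bar>c1\<bar> + \<bar>c2\<bar>) * (k\<^sup>2 * X + k * Y)"
proof -
  have X: "0 \<le> X" and Y: "0 \<le> Y"
    using order_trans[OF norm_ge_zero assms(4)] order_trans[OF norm_ge_zero assms(5)] .
  have "c1 * k\<^sup>2 \<le> \<bar>c1\<bar> * k\<^sup>2" "c2 * k \<le> \<bar>c2\<bar> * k"
    using assms(1) by (intro mult_right_mono; simp)+
  then have "\<bar>\<epsilon>\<bar> \<le> \<bar>c1\<bar> * k\<^sup>2" and eta: "cmod \<eta> \<le> \<bar>c2\<bar> * k"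
    using assms(2,3) by linarith+
  moreover have "cmod (of_real (2 * k\<^sup>2) + \<i> * of_real \<epsilon>) \<le> 2 * k\<^sup>2 + \<bar>\<epsilon>\<bar>"
    using norm_triangle_ineq[of "of_real (2 * k\<^sup>2)" "\<i> * of_real \<epsilon>"]
    by (simp add: norm_mult del: of_real_power)
  ultimately have eps: "cmod (of_real (2 * k\<^sup>2) + \<i> * of_real \<epsilon>) \<le> (2 + \<bar>c1\<bar>) * k\<^sup>2"
    by (simp add: distrib_right)
  have "cmod ((of_real (2 * k\<^sup>2) + \<i> * of_real \<epsilon>) * L + \<i> * \<eta> * B)
      \<le> cmod (of_real (2 * k\<^sup>2) + \<i> * of_real \<epsilon>) * cmod L + cmod \<eta> * cmod B"
    by (rule order_trans[OF norm_triangle_ineq]) (simp add: norm_mult)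
  also have "\<dots> \<le> ((2 + \<bar>c1\<bar>) * k\<^sup>2) * X + (\<bar>c2\<bar> * k) * Y"
    using eps eta assms(1,4,5) by (intro add_mono mult_mono) auto
  also have "\<dots> \<le> (2 + \<bar>c1\<bar> + \<bar>c2\<bar>) * (k\<^sup>2 * X + k * Y)"
    using assms(1) X Y by (simp add: distrib_left distrib_right add_increasing)
  finally show ?thesis .
qed

lemma ip1k_sum_eq_norms_plus_residuals:
  assumes "finite I" "bounded_ae_differentiable \<Omega> v" "\<And>l. l \<in> I \<Longrightarrow> bounded_ae_differentiable \<Omega> (Q l)"
    "open \<Omega>" "bounded \<Omega>"
  shows "ip1k \<Omega> k v (\<lambda>x. \<Sum>l\<in>I. Q l x)
           = (\<Sum>l\<in>I. complex_of_real ((norm1k \<Omega> k (Q l))\<^sup>2) + ip1k \<Omega> k (\<lambda>x. v x - Q l x) (Q l))"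
proof -
  have "ip1k \<Omega> k v (Q l) = complex_of_real ((norm1k \<Omega> k (Q l))\<^sup>2) + ip1k \<Omega> k (\<lambda>x. v x - Q l x) (Q l)"
    if "l \<in> I" for l
    using ip1k_diff_left[OF assms(2) assms(3)[OF that] assms(3)[OF that] assms(4,5)] by (simp add: ip1k_self)
  then show ?thesis
    using ip1k_sum_right[OF assms] by (simp cong: sum.cong)
qed

lemma norm_projection_residual_le:
  assumes \<Omega>: "open \<Omega>" "bounded \<Omega>"
    and v: "bounded_ae_differentiable \<Omega> v" and q: "bounded_ae_differentiable \<Omega> q"
    and galerkin: "a_eps \<Omega> T k \<epsilon> \<eta> q q = a_eps \<Omega> T k \<epsilon> \<eta> v q"
    and k: "k > 0" "\<bar>\<epsilon>\<bar> \<le> c1 * k\<^sup>2" "cmod \<eta> \<le> c2 * k"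
    and L2: "cmod (L2_form \<Omega> (\<lambda>x. v x - q x) q) \<le> X"
    and bdry: "cmod (bdry_integral \<Omega> T (frontier \<Omega>) (\<lambda>x. (v x - q x) * cnj (q x))) \<le> Y"
  shows "cmod (ip1k \<Omega> k (\<lambda>x. v x - q x) q) \<le> (2 + \<bar>c1\<bar> + \<bar>c2\<bar>) * (k\<^sup>2 * X + k * Y)"
proof -
  have "a_eps \<Omega> T k \<epsilon> \<eta> (\<lambda>x. v x - q x) q = 0"
    using a_eps_diff_left[OF v q q \<Omega>] galerkin by simp
  then have "ip1k \<Omega> k (\<lambda>x. v x - q x) q = (of_real (2 * k\<^sup>2) + \<i> * of_real \<epsilon>) * L2_form \<Omega> (\<lambda>x. v x - q x) q
      + \<i> * \<eta> * bdry_integral \<Omega> T (frontier \<Omega>) (\<lambda>x. (v x - q x) * cnj (q x))"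
    by (rule ip1k_eq_if_a_eps_eq_zero)
  then show ?thesis
    using norm_residual_le[OF k L2 bdry] by simp
qed

lemma cauchy_schwarz_residual_terms:
  fixes \<Omega> :: "'a::euclidean_space set"
  assumes dim: "DIM('a) = 2 \<or> DIM('a) = 3"
    and \<Omega>: "open \<Omega>" "bounded \<Omega>" "lipschitz_domain \<Omega>" and mesh: "simplicial_mesh \<Omega> T"
    and Om: "l \<noteq> 0 \<Longrightarrow> \<exists>\<A>\<subseteq>T. Om l = interior (\<Union>S\<in>\<A>. convex hull S)"
    and supp: "l \<noteq> 0 \<Longrightarrow> supp q \<subseteq> closure (Om l)"
    and f: "bounded_borel f" and q: "bounded_borel q"
  defines "D \<equiv> if l = 0 then \<Omega> else Om l"
    and "G \<equiv> if l = 0 then frontier \<Omega> else frontier \<Omega> \<inter> frontier (Om l)"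
  shows "cmod (L2_form \<Omega> f q) \<le> L2_norm_on D f * L2_norm_on D q
      \<and> cmod (bdry_integral \<Omega> T (frontier \<Omega>) (\<lambda>x. f x * cnj (q x))) \<le> bdry_norm_on \<Omega> T G f * bdry_norm_on \<Omega> T G q"
proof (cases "l = 0")
  case True
  have "\<Omega> \<in> sets lebesgue"
    using \<Omega>(1,2) by (intro fmeasurableD lmeasurable_open)
  then have "cmod (L2_form \<Omega> f q) \<le> L2_norm_on \<Omega> f * L2_norm_on \<Omega> q"
    using f q \<Omega>(2) by (intro norm_L2_form_le)
  moreover have "cmod (bdry_integral \<Omega> T (frontier \<Omega>) (\<lambda>x. f x * cnj (q x)))
      \<le> bdry_norm_on \<Omega> T (frontier \<Omega>) f * bdry_norm_on \<Omega> T (frontier \<Omega>) q"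
    by (rule norm_bdry_integral_mult_cnj_le[OF dim _ f q]) simp
  ultimately show ?thesis
    unfolding D_def G_def using True by simp
next
  case False
  then obtain \<A> where \<A>: "\<A> \<subseteq> T" "Om l = interior (\<Union>S\<in>\<A>. convex hull S)"
    using Om by blast
  note U = interior_simplices_in_mesh[OF \<Omega>(2) mesh \<A>(1), folded \<A>(2)]
  have q0: "q x = 0" if "x \<notin> closure (Om l)" for x
    using supp[OF False] that by (rule eq_0_if_supp_subset)
  have "cmod (L2_form \<Omega> f q) \<le> L2_norm_on (Om l) f * L2_norm_on (Om l) q"
    using f q q0 \<Omega>(1,2) U(1,2,4) by (rule norm_L2_form_le_on_support)
  moreover have "bdry_integral \<Omega> T (frontier \<Omega>) (\<lambda>x. f x * cnj (q x))
      = bdry_integral \<Omega> T (frontier \<Omega> \<inter> frontier (Om l)) (\<lambda>x. f x * cnj (q x))"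
    using q0 frontier_Int_closure_subset_frontier[OF \<Omega>(1,3) U(1,3)] by (rule bdry_integral_eq_on_support)
  moreover have "cmod (bdry_integral \<Omega> T (frontier \<Omega> \<inter> frontier (Om l)) (\<lambda>x. f x * cnj (q x)))
      \<le> bdry_norm_on \<Omega> T (frontier \<Omega> \<inter> frontier (Om l)) f * bdry_norm_on \<Omega> T (frontier \<Omega> \<inter> frontier (Om l)) q"
    by (rule norm_bdry_integral_mult_cnj_le[OF dim _ f q]) auto
  ultimately show ?thesis
    unfolding D_def G_def using False by simp
qed

lemma projection_estimates:
  fixes \<Omega> :: "'a::euclidean_space set" and Q :: "nat \<Rightarrow> 'a \<Rightarrow> complex"
  assumes dim: "DIM('a) = 2 \<or> DIM('a) = 3"
    and \<Omega>: "open \<Omega>" "bounded \<Omega>" "lipschitz_domain \<Omega>"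
    and mesh: "simplicial_mesh \<Omega> T" and mesh0: "simplicial_mesh \<Omega> T0"
    and Om: "\<forall>l\<in>{1..N}. \<exists>\<A>\<subseteq>T. \<A> \<noteq> {} \<and> Om l = interior (\<Union>S\<in>\<A>. convex hull S)"
    and k: "k > 0" "\<bar>\<epsilon>\<bar> \<le> c1 * k\<^sup>2" "cmod \<eta> \<le> c2 * k"
    and v: "v \<in> P1_space \<Omega> T"
    and Q: "\<forall>l\<le>N. Q l \<in> (if l = 0 then P1_space \<Omega> T0 else {w \<in> P1_space \<Omega> T. supp w \<subseteq> closure (Om l)}) \<and>
              (\<forall>w\<in>(if l = 0 then P1_space \<Omega> T0 else {w \<in> P1_space \<Omega> T. supp w \<subseteq> closure (Om l)}).
                 a_eps \<Omega> T k \<epsilon> \<eta> (Q l) w = a_eps \<Omega> T k \<epsilon> \<eta> v w)"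
  shows "ip1k \<Omega> k v (\<lambda>x. \<Sum>l\<le>N. Q l x) =
        (\<Sum>l\<le>N. complex_of_real ((norm1k \<Omega> k (Q l))\<^sup>2) + ip1k \<Omega> k (\<lambda>x. v x - Q l x) (Q l))
     \<and> (\<forall>l\<le>N. cmod (ip1k \<Omega> k (\<lambda>x. v x - Q l x) (Q l)) \<le> (2 + \<bar>c1\<bar> + \<bar>c2\<bar>) *
          (k\<^sup>2 * L2_norm_on (if l = 0 then \<Omega> else Om l) (\<lambda>x. v x - Q l x) * L2_norm_on (if l = 0 then \<Omega> else Om l) (Q l)
           + k * bdry_norm_on \<Omega> T (if l = 0 then frontier \<Omega> else frontier \<Omega> \<inter> frontier (Om l)) (\<lambda>x. v x - Q l x)
               * bdry_norm_on \<Omega> T (if l = 0 then frontier \<Omega> else frontier \<Omega> \<inter> frontier (Om l)) (Q l)))"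
proof (intro conjI allI impI)
  have QV: "Q l \<in> (if l = 0 then P1_space \<Omega> T0 else {w \<in> P1_space \<Omega> T. supp w \<subseteq> closure (Om l)})"
    and galerkin: "a_eps \<Omega> T k \<epsilon> \<eta> (Q l) (Q l) = a_eps \<Omega> T k \<epsilon> \<eta> v (Q l)" if "l \<le> N" for l
    using Q[rule_format, OF that] by auto
  have v': "bounded_ae_differentiable \<Omega> v"
    using \<Omega>(2) mesh v by (rule P1_space_bounded_ae_differentiable)
  have Q': "bounded_ae_differentiable \<Omega> (Q l)" if "l \<le> N" for l
    using QV[OF that] P1_space_bounded_ae_differentiable[OF \<Omega>(2) mesh0]
      P1_space_bounded_ae_differentiable[OF \<Omega>(2) mesh]
    by (cases "l = 0") simp_all
  show "ip1k \<Omega> k v (\<lambda>x. \<Sum>l\<le>N. Q l x) =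
      (\<Sum>l\<le>N. complex_of_real ((norm1k \<Omega> k (Q l))\<^sup>2) + ip1k \<Omega> k (\<lambda>x. v x - Q l x) (Q l))"
    using v' Q' \<Omega>(1,2) by (intro ip1k_sum_eq_norms_plus_residuals) auto
  fix l assume l: "l \<le> N"
  have "bounded_borel (\<lambda>x. v x - Q l x)" "bounded_borel (Q l)"
    using v' Q'[OF l] by (auto intro: bounded_ae_differentiable_bounded_borel bounded_ae_differentiable_diff)
  moreover have "\<exists>\<A>\<subseteq>T. Om l = interior (\<Union>S\<in>\<A>. convex hull S)" if "l \<noteq> 0"
    using Om l that by (meson atLeastAtMost_iff less_one not_le)
  moreover have "supp (Q l) \<subseteq> closure (Om l)" if "l \<noteq> 0"
    using QV[OF l] that by simp
  ultimately have "cmod (L2_form \<Omega> (\<lambda>x. v x - Q l x) (Q l))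
        \<le> L2_norm_on (if l = 0 then \<Omega> else Om l) (\<lambda>x. v x - Q l x) * L2_norm_on (if l = 0 then \<Omega> else Om l) (Q l)
      \<and> cmod (bdry_integral \<Omega> T (frontier \<Omega>) (\<lambda>x. (v x - Q l x) * cnj (Q l x)))
        \<le> bdry_norm_on \<Omega> T (if l = 0 then frontier \<Omega> else frontier \<Omega> \<inter> frontier (Om l)) (\<lambda>x. v x - Q l x)
          * bdry_norm_on \<Omega> T (if l = 0 then frontier \<Omega> else frontier \<Omega> \<inter> frontier (Om l)) (Q l)"
    by (intro cauchy_schwarz_residual_terms[OF dim \<Omega> mesh])
  then show "cmod (ip1k \<Omega> k (\<lambda>x. v x - Q l x) (Q l)) \<le> (2 + \<bar>c1\<bar> + \<bar>c2\<bar>) *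
          (k\<^sup>2 * L2_norm_on (if l = 0 then \<Omega> else Om l) (\<lambda>x. v x - Q l x) * L2_norm_on (if l = 0 then \<Omega> else Om l) (Q l)
           + k * bdry_norm_on \<Omega> T (if l = 0 then frontier \<Omega> else frontier \<Omega> \<inter> frontier (Om l)) (\<lambda>x. v x - Q l x)
               * bdry_norm_on \<Omega> T (if l = 0 then frontier \<Omega> else frontier \<Omega> \<inter> frontier (Om l)) (Q l))"
    unfolding mult.assoc
    by (elim conjE) (rule norm_projection_residual_le[OF \<Omega>(1,2) v' Q'[OF l] galerkin[OF l] k])
qed

theorem lemma4p14:
  fixes \<Omega> :: "'a::euclidean_space set"
  assumes dim: "DIM('a) = 2 \<or> DIM('a) = 3"
    and dom: "open \<Omega>" "bounded \<Omega>" "connected \<Omega>" "\<Omega> \<noteq> {}" "lipschitz_domain \<Omega>"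
  shows "\<forall>c1 c2. \<exists>C>0. \<forall>(\<T> :: 'a set set) (\<T>0 :: 'a set set) (N :: nat) (Om :: nat \<Rightarrow> 'a set)
            (k :: real) (\<epsilon> :: real) (\<eta> :: complex) (v :: 'a \<Rightarrow> complex) (Q :: nat \<Rightarrow> 'a \<Rightarrow> complex).
     let Vh = P1_space \<Omega> \<T>;
         V = (\<lambda>l. if l = 0 then P1_space \<Omega> \<T>0 else {w \<in> Vh. supp w \<subseteq> closure (Om l)});
         Dom = (\<lambda>l. if l = 0 then \<Omega> else Om l);
         Gam = (\<lambda>l. if l = 0 then frontier \<Omega> else frontier \<Omega> \<inter> frontier (Om l));
         a = a_eps \<Omega> \<T> k \<epsilon> \<eta>;
         z = helm_z k \<epsilon>;
         R = (\<lambda>l. ip1k \<Omega> k (\<lambda>x. v x - Q l x) (Q l))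
     in
     simplicial_mesh \<Omega> \<T> \<longrightarrow>
     simplicial_mesh \<Omega> \<T>0 \<longrightarrow>
     (\<forall>S0\<in>\<T>0. \<exists>\<A>\<subseteq>\<T>. convex hull S0 = (\<Union>S\<in>\<A>. convex hull S)) \<longrightarrow>
     N \<ge> 1 \<longrightarrow>
     (\<forall>l\<in>{1..N}. \<exists>\<A>\<subseteq>\<T>. \<A> \<noteq> {} \<and> Om l = interior (\<Union>S\<in>\<A>. convex hull S)) \<longrightarrow>
     (\<Union>l\<in>{1..N}. closure (Om l)) = closure \<Omega> \<longrightarrow>
     k > 0 \<longrightarrow> \<epsilon> \<noteq> 0 \<longrightarrow> \<bar>\<epsilon>\<bar> \<le> c1 * k\<^sup>2 \<longrightarrow> cmod \<eta> \<le> c2 * k \<longrightarrow>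
     Re (cnj z * \<eta>) \<ge> 0 \<longrightarrow>
     v \<in> Vh \<longrightarrow>
     (\<forall>l\<le>N. Q l \<in> V l \<and> (\<forall>w\<in>V l. a (Q l) w = a v w)) \<longrightarrow>
     ip1k \<Omega> k v (\<lambda>x. \<Sum>l\<le>N. Q l x) =
        (\<Sum>l\<le>N. complex_of_real ((norm1k \<Omega> k (Q l))\<^sup>2) + R l)
     \<and> (\<forall>l\<le>N. cmod (R l) \<le> C *
          (k\<^sup>2 * L2_norm_on (Dom l) (\<lambda>x. v x - Q l x) * L2_norm_on (Dom l) (Q l)
           + k * bdry_norm_on \<Omega> \<T> (Gam l) (\<lambda>x. v x - Q l x) * bdry_norm_on \<Omega> \<T> (Gam l) (Q l)))"
  apply (intro allI)
  subgoal for c1 c2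
    apply (rule exI[of _ "2 + \<bar>c1\<bar> + \<bar>c2\<bar>"])
    unfolding Let_def
    apply (rule conjI)
     apply simp
    apply (intro allI impI)
    subgoal premises hyps
      by (rule projection_estimates[OF dim dom(1,2,5) hyps(1,2,5,7,9,10,12,13)])
    done
  done

end
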